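(* Let $n\ge4$ and $r\le n$. Let $\hat{\mathbf A}\in\mathbb R^{p\times r}$ and an orthogonal $\hat{\mathbf P}\in\mathbb R^{r\times r}$ be random with $(\hat{\mathbf A},\hat{\mathbf P})$ independent of $\{\omega_{ij}:i\in\mathcal N_2,j\in[p]\}$, and set $\mathbf A^*=\mathbf V_r^*\hat{\mathbf P}$, $\boldsymbol\Theta^*=\mathbf U_r^*\mathbf D_r^*\hat{\mathbf P}$. If $\|\hat{\mathbf A}\|_{2\to\infty}\le C_2$, $\|\mathbf V_r^*\|_{2\to\infty}\le C_2$ and $\|\mathbf U_r^*\mathbf D_r^*\|_{2\to\infty}\le C_1$, then with probability at least $1-1/(nr)$, $$\max_{i\in\mathcal N_2}\|\mathbf B_{1,i}(\hat{\mathbf A})\|\le\kappa_2^*\pi_{\max}C_1\|\hat{\mathbf A}\|_2\|\hat{\mathbf A}-\mathbf A^*\|_F+64\log(n)\big(\pi_{\max}^{1/2}\kappa_2^*C_1C_2\|\hat{\mathbf A}-\mathbf A^*\|_F+\kappa_2^*C_1C_2^2\big).$$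
   Context: $b:\mathbb R\to\mathbb R$ is twice continuously differentiable with $b''>0$. $\mathbf M^*=(m^*_{ij})\in\mathbb R^{n\times p}$ is deterministic of rank $r$ with compact SVD $\mathbf U_r^*\mathbf D_r^*(\mathbf V_r^* )^T$ ($\mathbf U_r^*,\mathbf V_r^*$ with orthonormal columns, $\mathbf D_r^*$ diagonal with positive singular values). The $\omega_{ij}\in\{0,1\}$ are independent Bernoulli$(\pi_{ij})$, $\pi_{\max}=\max\pi_{ij}$. $\mathcal N_2\subset[n]$ is fixed. $\rho=\|\mathbf M^*\|_{\max}=\max|m^*_{ij}|$, $\kappa_2(\alpha)=\sup_{|x|\le\alpha}b''(x)$, $\kappa_2^*=\kappa_2(2\rho+1)$. With $\hat{\mathbf a}_j^T,\mathbf a_j^{*T},\boldsymbol\theta_i^{*T}$ the rows of $\hat{\mathbf A},\mathbf A^*,\boldsymbol\Theta^*$: $\mathbf B_{1,i}(\hat{\mathbf A})=\sum_{j=1}^p\omega_{ij}b''(m^*_{ij})\hat{\mathbf a}_j(\hat{\mathbf a}_j-\mathbf a_j^* )^T\boldsymbol\theta_i^*$. $\|\cdot\|_2$ spectral, $\|\cdot\|_F$ Frobenius, $\|X\|_{2\to\infty}$ maximal row Euclidean norm. *)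

theory Defs
  imports "HOL-Probability.Probability"
begin

text \<open>Matrices are rendered as real^'c^'r (rows indexed by 'r, columns by 'c).\<close>

definition norm_2inf :: "real^'c^'r \<Rightarrow> real" where
  "norm_2inf A = Max (range (\<lambda>j. norm (A $ j)))"

definition norm_F :: "real^'c^'r \<Rightarrow> real" where
  "norm_F A = sqrt (\<Sum>i\<in>UNIV. \<Sum>j\<in>UNIV. (A $ i $ j)^2)"

definition norm_spec :: "real^'c^'r \<Rightarrow> real" where
  "norm_spec A = onorm (\<lambda>v. A *v v)"

definition norm_max :: "real^'c^'r \<Rightarrow> real" where
  "norm_max A = Max (range (\<lambda>(i,j). \<bar>A $ i $ j\<bar>))"

text \<open>kappa_2(alpha) = sup over |x| <= alpha of b''(x); b2 stands for b''.\<close>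
definition kappa2 :: "(real \<Rightarrow> real) \<Rightarrow> real \<Rightarrow> real" where
  "kappa2 b2 \<alpha> = Sup (b2 ` {x. \<bar>x\<bar> \<le> \<alpha>})"

text \<open>B_{1,i}(Ahat) = sum_j om_ij b''(m*_ij) ahat_j (ahat_j - a*_j)^T theta*_i,
  given the realisation om of the omega's.\<close>
definition B1 :: "(real \<Rightarrow> real) \<Rightarrow> real^'p^'n \<Rightarrow> ('n \<Rightarrow> 'p \<Rightarrow> real)
    \<Rightarrow> real^'r^'p \<Rightarrow> real^'r^'p \<Rightarrow> real^'r^'n \<Rightarrow> 'n \<Rightarrow> real^'r" where
  "B1 b2 Mst om Ah Ast Th i =
     (\<Sum>j\<in>UNIV. (om i j * b2 (Mst $ i $ j) * ((Ah $ j - Ast $ j) \<bullet> (Th $ i))) *\<^sub>R (Ah $ j))"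

end

theory Submission
  imports Defs
begin

text \<open>\<open>B1\<close> is linear in the weights, so split \<open>\<omega> = \<pi> + (\<omega> - \<pi>)\<close>. With the mean weights \<open>\<pi>\<close>,
  \<open>B1\<close> is a combination of the rows of \<open>Ahat\<close> whose coefficient vector has norm at most
  \<open>\<kappa> \<pi>max C1 \<parallel>Ahat - A*\<parallel>\<^sub>F\<close>; this gives the first term. For fixed \<open>(Ahat, Phat)\<close> the centred part
  is a sum of independent centred random vectors with summands of norm at most \<open>2 \<kappa> C1 C2\<^sup>2\<close> and
  variance proxy \<open>\<sigma>\<^sup>2 = \<pi>max (\<kappa> C1 C2 \<parallel>Ahat - A*\<parallel>\<^sub>F)\<^sup>2\<close>. McDiarmid's exponential moment bound for
  its norm, a Chernoff step and \<open>E \<parallel>\<cdot>\<parallel> \<le> \<sigma>\<close> give failure probability \<open>n\<^sup>-\<^sup>3\<close> per row, hence \<open>1/(n r)\<close>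
  after a union bound over at most \<open>n \<ge> r\<close> rows. Independence of \<open>(Ahat, Phat)\<close> from the \<open>\<omega> i j\<close>,
  \<open>i \<in> N2\<close>, lets this conditional bound be averaged over \<open>(Ahat, Phat)\<close>.\<close>

section \<open>Independent Bernoulli coordinates\<close>

definition bernoulli_weight :: "real \<Rightarrow> real \<Rightarrow> real" where
  "bernoulli_weight p v = (if v = 1 then p else 1 - p)"

text \<open>Expectation under independent Bernoulli coordinates \<open>c s\<close> with \<open>P(c s = 1) = p s\<close>,
  written as a finite sum over the extensional outcomes \<open>S \<rightarrow> {0,1}\<close>.\<close>
definition bernoulli_expectation :: "'s set \<Rightarrow> ('s \<Rightarrow> real) \<Rightarrow> (('s \<Rightarrow> real) \<Rightarrow> real) \<Rightarrow> real" where
  "bernoulli_expectation S p h =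
     (\<Sum>c\<in>PiE S (\<lambda>_. {0,1}). (\<Prod>s\<in>S. bernoulli_weight (p s) (c s)) * h c)"

lemma bernoulli_weight_nonneg: "0 \<le> p \<Longrightarrow> p \<le> 1 \<Longrightarrow> 0 \<le> bernoulli_weight p v"
  by (simp add: bernoulli_weight_def)

lemma bernoulli_expectation_empty: "bernoulli_expectation {} p h = h (\<lambda>_. undefined)"
  by (simp add: bernoulli_expectation_def)

lemma bernoulli_expectation_insert:
  assumes "finite S" "s \<notin> S"
  shows "bernoulli_expectation (insert s S) p h =
           (1 - p s) * bernoulli_expectation S p (\<lambda>g. h (g(s:=0)))
         + p s * bernoulli_expectation S p (\<lambda>g. h (g(s:=1)))"
proof -
  let ?F = "\<lambda>_::'a. {0::real,1}"
  let ?\<phi> = "\<lambda>c. (\<Prod>t\<in>insert s S. bernoulli_weight (p t) (c t)) * h c"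
  have "bernoulli_expectation (insert s S) p h = (\<Sum>(y,g)\<in>?F s \<times> PiE S ?F. ?\<phi> (g(s:=y)))"
    unfolding bernoulli_expectation_def PiE_insert_eq
    by (subst sum.reindex[OF inj_combinator[OF assms(2)]]) (simp add: comp_def case_prod_beta')
  also have "\<dots> = (\<Sum>(y,g)\<in>?F s \<times> PiE S ?F.
      bernoulli_weight (p s) y * ((\<Prod>t\<in>S. bernoulli_weight (p t) (g t)) * h (g(s:=y))))"
  proof (intro sum.cong refl, clarify)
    fix y g
    have "(\<Prod>t\<in>S. bernoulli_weight (p t) ((g(s:=y)) t)) = (\<Prod>t\<in>S. bernoulli_weight (p t) (g t))"
      using assms by (intro prod.cong) auto
    then show "?\<phi> (g(s:=y)) =
        bernoulli_weight (p s) y * ((\<Prod>t\<in>S. bernoulli_weight (p t) (g t)) * h (g(s:=y)))"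
      using assms by simp
  qed
  also have "\<dots> = (\<Sum>y\<in>?F s. bernoulli_weight (p s) y * bernoulli_expectation S p (\<lambda>g. h (g(s:=y))))"
    by (subst sum.cartesian_product[symmetric])
       (simp add: bernoulli_expectation_def sum_distrib_left)
  also have "\<dots> = (1 - p s) * bernoulli_expectation S p (\<lambda>g. h (g(s:=0)))
                + p s * bernoulli_expectation S p (\<lambda>g. h (g(s:=1)))"
    by (simp add: bernoulli_weight_def)
  finally show ?thesis .
qed

lemma bernoulli_expectation_add:
  "bernoulli_expectation S p (\<lambda>c. f c + g c) = bernoulli_expectation S p f + bernoulli_expectation S p g"
  by (simp add: bernoulli_expectation_def distrib_left sum.distrib)

lemma bernoulli_expectation_diff:
  "bernoulli_expectation S p (\<lambda>c. f c - g c) = bernoulli_expectation S p f - bernoulli_expectation S p g"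
  by (simp add: bernoulli_expectation_def right_diff_distrib sum_subtractf)

lemma bernoulli_expectation_cmult:
  "bernoulli_expectation S p (\<lambda>c. a * f c) = a * bernoulli_expectation S p f"
  by (simp add: bernoulli_expectation_def sum_distrib_left mult.left_commute)

lemma bernoulli_expectation_sum:
  "bernoulli_expectation S p (\<lambda>c. \<Sum>i\<in>I. f i c) = (\<Sum>i\<in>I. bernoulli_expectation S p (f i))"
  unfolding bernoulli_expectation_def by (simp add: sum_distrib_left) (rule sum.swap)

lemma bernoulli_expectation_const:
  assumes "finite S"
  shows "bernoulli_expectation S p (\<lambda>_. a) = a"
proof -
  have "bernoulli_expectation S p (\<lambda>_. 1) = 1"
    using assms
    by (induction S rule: finite_induct)
       (simp_all add: bernoulli_expectation_empty bernoulli_expectation_insert algebra_simps)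
  then show ?thesis
    using bernoulli_expectation_cmult[of S p a "\<lambda>_. 1"] by simp
qed

lemma bernoulli_expectation_mono:
  assumes "\<forall>s\<in>S. 0 \<le> p s \<and> p s \<le> 1" "\<And>c. c \<in> PiE S (\<lambda>_. {0,1}) \<Longrightarrow> f c \<le> g c"
  shows "bernoulli_expectation S p f \<le> bernoulli_expectation S p g"
  unfolding bernoulli_expectation_def using assms
  by (intro sum_mono mult_left_mono prod_nonneg) (auto intro: bernoulli_weight_nonneg)

lemma bernoulli_expectation_nonneg:
  assumes "\<forall>s\<in>S. 0 \<le> p s \<and> p s \<le> 1" "finite S" "\<And>c. 0 \<le> f c"
  shows "0 \<le> bernoulli_expectation S p f"
  using bernoulli_expectation_mono[OF assms(1), of "\<lambda>_. 0" f] assms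
    bernoulli_expectation_const[OF assms(2), of p 0]
  by auto

lemma abs_bernoulli_expectation_le:
  assumes "\<forall>s\<in>S. 0 \<le> p s \<and> p s \<le> 1"
  shows "\<bar>bernoulli_expectation S p f\<bar> \<le> bernoulli_expectation S p (\<lambda>c. \<bar>f c\<bar>)"
proof -
  have "\<bar>bernoulli_expectation S p f\<bar>
      \<le> (\<Sum>c\<in>PiE S (\<lambda>_. {0,1}). \<bar>(\<Prod>s\<in>S. bernoulli_weight (p s) (c s)) * f c\<bar>)"
    unfolding bernoulli_expectation_def by (rule sum_abs)
  also have "\<dots> = bernoulli_expectation S p (\<lambda>c. \<bar>f c\<bar>)"
    unfolding bernoulli_expectation_def using assms
    by (intro sum.cong refl) (simp add: abs_mult abs_of_nonneg prod_nonneg bernoulli_weight_nonneg)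
  finally show ?thesis .
qed

lemma abs_bernoulli_expectation_diff_le:
  assumes "\<forall>s\<in>S. 0 \<le> p s \<and> p s \<le> 1" "finite S"
    and "\<And>c. c \<in> PiE S (\<lambda>_. {0,1}) \<Longrightarrow> \<bar>f c - g c\<bar> \<le> d"
  shows "\<bar>bernoulli_expectation S p f - bernoulli_expectation S p g\<bar> \<le> d"
proof -
  have "\<bar>bernoulli_expectation S p f - bernoulli_expectation S p g\<bar>
      \<le> bernoulli_expectation S p (\<lambda>c. \<bar>f c - g c\<bar>)"
    unfolding bernoulli_expectation_diff[symmetric] by (rule abs_bernoulli_expectation_le[OF assms(1)])
  also have "\<dots> \<le> bernoulli_expectation S p (\<lambda>_. d)"
    using assms(1,3) by (rule bernoulli_expectation_mono)
  finally show ?thesis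
    using assms(2) by (simp add: bernoulli_expectation_const)
qed

lemma square_bernoulli_expectation_le:
  assumes "\<forall>s\<in>S. 0 \<le> p s \<and> p s \<le> 1" "finite S"
  shows "(bernoulli_expectation S p f)^2 \<le> bernoulli_expectation S p (\<lambda>c. (f c)^2)"
proof -
  define m where "m = bernoulli_expectation S p f"
  have "0 \<le> bernoulli_expectation S p (\<lambda>c. (f c - m)^2)"
    by (rule bernoulli_expectation_nonneg[OF assms]) simp
  also have "bernoulli_expectation S p (\<lambda>c. (f c - m)^2)
           = bernoulli_expectation S p (\<lambda>c. (f c)^2 + (-2 * m) * f c + m^2)"
    by (simp add: power2_eq_square algebra_simps)
  also have "\<dots> = bernoulli_expectation S p (\<lambda>c. (f c)^2) - m^2"
    by (simp only: bernoulli_expectation_add bernoulli_expectation_cmult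
        bernoulli_expectation_const[OF assms(2)] m_def) (simp add: power2_eq_square)
  finally show ?thesis by (simp add: m_def)
qed

lemma bernoulli_expectation_of_bool_less_le:
  assumes "\<forall>s\<in>S. 0 \<le> p s \<and> p s \<le> 1" "0 \<le> l"
  shows "bernoulli_expectation S p (\<lambda>c. of_bool (t < h c))
       \<le> exp (- l * t) * bernoulli_expectation S p (\<lambda>c. exp (l * h c))"
proof -
  have "of_bool (t < h c) \<le> exp (- l * t) * exp (l * h c)" for c
  proof (cases "t < h c")
    case True
    then have "0 \<le> - l * t + l * h c"
      using assms(2) by (simp add: mult_left_mono algebra_simps)
    then show ?thesis by (simp add: exp_add[symmetric])
  qed simp
  then show ?thesis
    by (subst bernoulli_expectation_cmult[symmetric]) (rule bernoulli_expectation_mono[OF assms(1)])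
qed

lemma bernoulli_expectation_of_bool_Bex_le:
  fixes \<epsilon> :: real
  assumes "\<forall>s\<in>S. 0 \<le> p s \<and> p s \<le> 1" "finite I"
    and "\<And>i. i \<in> I \<Longrightarrow> bernoulli_expectation S p (\<lambda>c. of_bool (P i c)) \<le> \<epsilon>"
  shows "bernoulli_expectation S p (\<lambda>c. of_bool (\<exists>i\<in>I. P i c)) \<le> card I * \<epsilon>"
proof -
  have "of_bool (\<exists>i\<in>I. P i c) \<le> (\<Sum>i\<in>I. of_bool (P i c) :: real)" for c
  proof (cases "\<exists>i\<in>I. P i c")
    case True
    then obtain i where "i \<in> I" "P i c" by blast
    then have "of_bool (P i c) \<le> (\<Sum>i\<in>I. of_bool (P i c) :: real)"
      using assms(2) by (intro member_le_sum) auto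
    then show ?thesis using \<open>P i c\<close> True by simp
  qed (simp add: sum_nonneg)
  then have "bernoulli_expectation S p (\<lambda>c. of_bool (\<exists>i\<in>I. P i c))
           \<le> (\<Sum>i\<in>I. bernoulli_expectation S p (\<lambda>c. of_bool (P i c)))"
    by (subst bernoulli_expectation_sum[symmetric]) (rule bernoulli_expectation_mono[OF assms(1)])
  also have "\<dots> \<le> card I * \<epsilon>"
    using assms(3) by (rule sum_bounded_above)
  finally show ?thesis .
qed

section \<open>Concentration for sums of independent centred vectors\<close>

lemma exp_le_quadratic:
  fixes u :: real
  assumes "\<bar>u\<bar> \<le> 1"
  shows "exp u \<le> 1 + u + u^2"
proof (cases "u \<ge> 0")
  case True
  then show ?thesis using exp_bound[of u] assms by simp
next
  case False
  define v where "v = -u"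
  have v: "0 < v" "v \<le> 1" using False assms by (auto simp: v_def)
  have "exp u \<le> 1 / (1 + v)"
    using exp_ge_add_one_self[of v] v by (simp add: v_def exp_minus field_simps)
  also have "\<dots> \<le> 1 - v + v^2"
  proof -
    have "1 \<le> (1 - v + v^2) * (1 + v)"
      using v by (simp add: algebra_simps power2_eq_square power3_eq_cube)
    then show ?thesis using v by (simp add: field_simps)
  qed
  finally show ?thesis by (simp add: v_def)
qed

lemma bernoulli_centred_mgf_le:
  fixes p l \<delta> :: real
  assumes "0 \<le> p" "p \<le> 1" "\<bar>l * \<delta>\<bar> \<le> 1"
  shows "(1 - p) * exp (l * (- p * \<delta>)) + p * exp (l * ((1 - p) * \<delta>)) \<le> exp (l^2 * p * \<delta>^2)"
proof -
  have small: "\<bar>l * (q * \<delta>)\<bar> \<le> 1" if "\<bar>q\<bar> \<le> 1" for q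
  proof -
    have "\<bar>l * (q * \<delta>)\<bar> = \<bar>q\<bar> * \<bar>l * \<delta>\<bar>" by (simp add: abs_mult)
    also have "\<dots> \<le> 1 * 1" using that assms by (intro mult_mono) auto
    finally show ?thesis by simp
  qed
  have "(1 - p) * exp (l * (- p * \<delta>)) + p * exp (l * ((1 - p) * \<delta>))
     \<le> (1 - p) * (1 + l * (- p * \<delta>) + (l * (- p * \<delta>))^2)
       + p * (1 + l * ((1 - p) * \<delta>) + (l * ((1 - p) * \<delta>))^2)"
    using assms small[of "-p"] small[of "1 - p"]
    by (intro add_mono mult_left_mono exp_le_quadratic) auto
  also have "\<dots> = 1 + l^2 * \<delta>^2 * (p * (1 - p))"
    by (simp add: algebra_simps power2_eq_square)
  also have "\<dots> \<le> 1 + l^2 * p * \<delta>^2"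
    using assms by (simp add: mult_left_mono algebra_simps)
  also have "\<dots> \<le> exp (l^2 * p * \<delta>^2)"
    by (rule exp_ge_add_one_self)
  finally show ?thesis .
qed

lemma bounded_differences_mgf_le:
  fixes h :: "('s \<Rightarrow> real) \<Rightarrow> real"
  assumes "finite S" "\<forall>s\<in>S. 0 \<le> p s \<and> p s \<le> 1" "0 \<le> l"
    and "\<forall>s\<in>S. 0 \<le> d s \<and> l * d s \<le> 1"
    and "\<forall>s\<in>S. \<forall>g. \<bar>h (g(s:=1)) - h (g(s:=0))\<bar> \<le> d s"
  shows "bernoulli_expectation S p (\<lambda>c. exp (l * (h c - bernoulli_expectation S p h)))
       \<le> exp (l^2 * (\<Sum>s\<in>S. p s * (d s)^2))"
  using assms
proof (induction S arbitrary: h rule: finite_induct)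
  case empty
  then show ?case by (simp add: bernoulli_expectation_empty)
next
  case (insert s S h)
  define hy where "hy y = (\<lambda>g. h (g(s:=y)))" for y
  define m where "m y = bernoulli_expectation S p (hy y)" for y
  define \<mu> where "\<mu> = (1 - p s) * m 0 + p s * m 1"
  define V where "V = (\<Sum>s\<in>S. p s * (d s)^2)"
  have ps: "0 \<le> p s" "p s \<le> 1" and pS: "\<forall>s\<in>S. 0 \<le> p s \<and> p s \<le> 1"
    using insert.prems by auto
  have hy_diff: "\<forall>t\<in>S. \<forall>g. \<bar>hy y (g(t:=1)) - hy y (g(t:=0))\<bar> \<le> d t" for y
  proof (intro ballI allI)
    fix t g assume t: "t \<in> S"
    then have "t \<noteq> s" using insert.hyps(2) by auto
    then show "\<bar>hy y (g(t:=1)) - hy y (g(t:=0))\<bar> \<le> d t"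
      using insert.prems(4)[rule_format, of t "g(s:=y)"] t by (simp add: hy_def fun_upd_twist)
  qed
  have conditional: "bernoulli_expectation S p (\<lambda>g. exp (l * (hy y g - \<mu>)))
                   \<le> exp (l * (m y - \<mu>)) * exp (l^2 * V)" for y
  proof -
    have "bernoulli_expectation S p (\<lambda>g. exp (l * (hy y g - \<mu>)))
        = exp (l * (m y - \<mu>)) * bernoulli_expectation S p (\<lambda>g. exp (l * (hy y g - m y)))"
      by (subst bernoulli_expectation_cmult[symmetric]) (simp add: exp_add[symmetric] algebra_simps)
    also have "\<dots> \<le> exp (l * (m y - \<mu>)) * exp (l^2 * V)"
      using insert.IH[OF pS insert.prems(2) _ hy_diff] insert.prems(3)
      by (intro mult_left_mono) (auto simp: V_def m_def)
    finally show ?thesis .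
  qed
  have diff: "\<bar>m 1 - m 0\<bar> \<le> d s"
    unfolding m_def using insert.prems(4)
    by (intro abs_bernoulli_expectation_diff_le[OF pS insert.hyps(1)]) (auto simp: hy_def fun_upd_def)
  have step: "\<bar>l * (m 1 - m 0)\<bar> \<le> 1"
    using diff insert.prems(2,3) mult_left_mono[of "\<bar>m 1 - m 0\<bar>" "d s" l]
    by (auto simp: abs_mult)
  have sq: "(m 1 - m 0)^2 \<le> (d s)^2"
    using diff by (metis abs_le_square_iff abs_of_nonneg abs_ge_zero order_trans)
  have "bernoulli_expectation (insert s S) p (\<lambda>c. exp (l * (h c - bernoulli_expectation (insert s S) p h)))
      = (1 - p s) * bernoulli_expectation S p (\<lambda>g. exp (l * (hy 0 g - \<mu>)))
        + p s * bernoulli_expectation S p (\<lambda>g. exp (l * (hy 1 g - \<mu>)))"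
    using insert.hyps by (simp add: bernoulli_expectation_insert \<mu>_def m_def hy_def)
  also have "\<dots> \<le> (1 - p s) * (exp (l * (m 0 - \<mu>)) * exp (l^2 * V))
                 + p s * (exp (l * (m 1 - \<mu>)) * exp (l^2 * V))"
    using conditional[of 0] conditional[of 1] ps by (intro add_mono mult_left_mono) auto
  also have "\<dots> = ((1 - p s) * exp (l * (- p s * (m 1 - m 0)))
                    + p s * exp (l * ((1 - p s) * (m 1 - m 0)))) * exp (l^2 * V)"
    by (simp add: \<mu>_def algebra_simps)
  also have "\<dots> \<le> exp (l^2 * p s * (m 1 - m 0)^2) * exp (l^2 * V)"
    by (intro mult_right_mono bernoulli_centred_mgf_le ps step) simp
  also have "\<dots> \<le> exp (l^2 * p s * (d s)^2) * exp (l^2 * V)"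
    using sq ps by (intro mult_right_mono exp_mono mult_left_mono) auto
  also have "\<dots> = exp (l^2 * (\<Sum>s\<in>insert s S. p s * (d s)^2))"
    using insert.hyps by (simp add: V_def exp_add[symmetric] algebra_simps)
  finally show ?case .
qed

lemma sum_fun_upd_insert:
  fixes a :: "'s \<Rightarrow> 'v::real_vector"
  assumes "finite S" "s \<notin> S"
  shows "(\<Sum>t\<in>insert s S. ((g(s:=y)) t - p t) *\<^sub>R a t)
       = (y - p s) *\<^sub>R a s + (\<Sum>t\<in>S. (g t - p t) *\<^sub>R a t)"
proof -
  have "(\<Sum>t\<in>S. ((g(s:=y)) t - p t) *\<^sub>R a t) = (\<Sum>t\<in>S. (g t - p t) *\<^sub>R a t)"
    using assms by (intro sum.cong) auto
  then show ?thesis using assms by simp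
qed

lemma bernoulli_second_moment:
  fixes a :: "'s \<Rightarrow> 'v::real_inner"
  assumes "finite S"
  shows "bernoulli_expectation S p (\<lambda>c. (norm (x + (\<Sum>s\<in>S. (c s - p s) *\<^sub>R a s)))^2)
       = (norm x)^2 + (\<Sum>s\<in>S. p s * (1 - p s) * (norm (a s))^2)"
  using assms
proof (induction S arbitrary: x rule: finite_induct)
  case empty
  then show ?case by (simp add: bernoulli_expectation_empty)
next
  case (insert s S x)
  define V where "V = (\<Sum>s\<in>S. p s * (1 - p s) * (norm (a s))^2)"
  have split: "x + (\<Sum>t\<in>insert s S. ((g(s:=y)) t - p t) *\<^sub>R a t)
             = (x + (y - p s) *\<^sub>R a s) + (\<Sum>t\<in>S. (g t - p t) *\<^sub>R a t)" for g y
    by (simp only: sum_fun_upd_insert[OF insert.hyps] add.assoc)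
  have norm_sq: "(norm (x + k *\<^sub>R a s))^2 = (norm x)^2 + 2 * k * (x \<bullet> a s) + k^2 * (norm (a s))^2"
    for k
    by (simp add: power2_norm_eq_inner inner_add_left inner_add_right inner_commute
        algebra_simps power2_eq_square[of k])
  have "bernoulli_expectation (insert s S) p (\<lambda>c. (norm (x + (\<Sum>s\<in>insert s S. (c s - p s) *\<^sub>R a s)))^2)
      = (1 - p s) * ((norm (x + (0 - p s) *\<^sub>R a s))^2 + V)
        + p s * ((norm (x + (1 - p s) *\<^sub>R a s))^2 + V)"
    by (simp only: bernoulli_expectation_insert[OF insert.hyps] split insert.IH V_def)
  also have "\<dots> = (norm x)^2 + (\<Sum>s\<in>insert s S. p s * (1 - p s) * (norm (a s))^2)"
    unfolding norm_sq using insert.hyps by (simp add: V_def algebra_simps power2_eq_square)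
  finally show ?case .
qed

lemma bernoulli_expectation_norm_sum_le:
  fixes a :: "'s \<Rightarrow> 'v::real_inner"
  assumes "finite S" "\<forall>s\<in>S. 0 \<le> p s \<and> p s \<le> 1"
  shows "bernoulli_expectation S p (\<lambda>c. norm (\<Sum>s\<in>S. (c s - p s) *\<^sub>R a s))
       \<le> sqrt (\<Sum>s\<in>S. p s * (norm (a s))^2)"
proof (rule real_le_rsqrt)
  have "(bernoulli_expectation S p (\<lambda>c. norm (\<Sum>s\<in>S. (c s - p s) *\<^sub>R a s)))^2
      \<le> bernoulli_expectation S p (\<lambda>c. (norm (\<Sum>s\<in>S. (c s - p s) *\<^sub>R a s))^2)"
    using assms by (intro square_bernoulli_expectation_le)
  also have "\<dots> = (\<Sum>s\<in>S. p s * (1 - p s) * (norm (a s))^2)"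
    using bernoulli_second_moment[OF assms(1), of p 0 a] by simp
  also have "\<dots> \<le> (\<Sum>s\<in>S. p s * (norm (a s))^2)"
    using assms(2) by (intro sum_mono) (auto intro!: mult_right_mono mult_left_le)
  finally show "(bernoulli_expectation S p (\<lambda>c. norm (\<Sum>s\<in>S. (c s - p s) *\<^sub>R a s)))^2
      \<le> (\<Sum>s\<in>S. p s * (norm (a s))^2)" .
qed

lemma norm_bernoulli_sum_bounded_differences:
  fixes a :: "'s \<Rightarrow> 'v::real_normed_vector"
  assumes "finite S" "s \<in> S"
  shows "\<bar>norm (\<Sum>t\<in>S. ((g(s:=1)) t - p t) *\<^sub>R a t) - norm (\<Sum>t\<in>S. ((g(s:=0)) t - p t) *\<^sub>R a t)\<bar>
       \<le> norm (a s)"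
proof -
  have S: "S = insert s (S - {s})" using assms(2) by auto
  have split: "(\<Sum>t\<in>S. ((g(s:=y)) t - p t) *\<^sub>R a t)
             = (y - p s) *\<^sub>R a s + (\<Sum>t\<in>S - {s}. (g t - p t) *\<^sub>R a t)" for y
    using assms(1) by (subst S, intro sum_fun_upd_insert) auto
  show ?thesis
    using norm_triangle_ineq3 unfolding split by (rule order.trans) (simp add: algebra_simps)
qed

lemma exp_two_minus_32_ln_le:
  fixes N :: real
  assumes "4 \<le> N"
  shows "exp (2 - 32 * ln N) \<le> 1 / N^3"
proof -
  have N0: "0 < N" using assms by simp
  have "exp (2::real) = (exp 1)^2" by (simp add: exp_of_nat_mult[of 2 1, symmetric])
  also have "\<dots> \<le> 3^2" using exp_le by (intro power_mono) auto
  also have "(3::real)^2 \<le> N^2" using assms by (intro power_mono) auto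
  also have "N^2 \<le> N^29" using assms by (intro power_increasing) auto
  finally have "exp 2 * N^3 \<le> N^29 * N^3" using N0 by (intro mult_right_mono) auto
  also have "\<dots> = exp (32 * ln N)"
    using exp_of_nat_mult[of 32 "ln N"] N0 by (simp add: power_add[symmetric])
  finally show ?thesis using N0 by (simp add: exp_diff field_simps)
qed

text \<open>Dimension-free: only the bounded differences of the norm of the sum enter, so the bound
  holds in any inner product space.\<close>
lemma bernoulli_sum_tail:
  fixes a :: "'s \<Rightarrow> 'v::real_inner"
  assumes S: "finite S" and p: "\<forall>s\<in>S. 0 \<le> p s \<and> p s \<le> 1"
    and aL: "\<forall>s\<in>S. norm (a s) \<le> L" and aV: "(\<Sum>s\<in>S. p s * (norm (a s))^2) \<le> \<sigma>^2"
    and \<sigma>: "0 \<le> \<sigma>" and L: "0 \<le> L" and N: "4 \<le> N"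
  shows "bernoulli_expectation S p
           (\<lambda>c. of_bool (64 * ln N * (\<sigma> + L/2) < norm (\<Sum>s\<in>S. (c s - p s) *\<^sub>R a s))) \<le> 1 / N^3"
proof (cases "\<sigma> + L = 0")
  case True
  then have "\<sigma> = 0" "L = 0" using \<sigma> L by auto
  moreover from \<open>L = 0\<close> have "\<forall>s\<in>S. a s = 0" using aL by (metis norm_le_zero_iff)
  ultimately show ?thesis
    using N by (simp add: bernoulli_expectation_const[OF S])
next
  case False
  then have pos: "0 < \<sigma> + L" using \<sigma> L by auto
  define h where "h = (\<lambda>c. norm (\<Sum>s\<in>S. (c s - p s) *\<^sub>R a s))"
  define m where "m = bernoulli_expectation S p h"
  define T where "T = 64 * ln N * (\<sigma> + L/2)"
  define l where "l = 1 / (\<sigma> + L)"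
  have l: "0 < l" "l * \<sigma> \<le> 1" "\<forall>s\<in>S. 0 \<le> norm (a s) \<and> l * norm (a s) \<le> 1"
    using pos \<sigma> L aL by (auto simp: l_def field_simps)
  have "1 \<le> ln N"
    using exp_le N by (simp add: ln_ge_iff)
  then have "32 * ln N \<le> l * T"
    using \<sigma> L pos by (simp add: T_def l_def field_simps)
  have m: "m \<le> \<sigma>"
    using bernoulli_expectation_norm_sum_le[OF S p, of a] real_le_lsqrt[OF \<sigma> aV]
    by (simp add: m_def h_def)
  have mgf: "bernoulli_expectation S p (\<lambda>c. exp (l * (h c - m))) \<le> exp 1"
  proof -
    have "bernoulli_expectation S p (\<lambda>c. exp (l * (h c - m)))
        \<le> exp (l^2 * (\<Sum>s\<in>S. p s * (norm (a s))^2))"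
      unfolding m_def using S p l(1,3)
      by (intro bounded_differences_mgf_le)
         (auto simp: h_def norm_bernoulli_sum_bounded_differences simp del: fun_upd_apply)
    also have "\<dots> \<le> exp ((l * \<sigma>)^2)"
      using aV by (simp add: power_mult_distrib mult_left_mono)
    also have "\<dots> \<le> exp 1"
      using l(1,2) \<sigma> by (simp add: power_le_one)
    finally show ?thesis .
  qed
  have "bernoulli_expectation S p (\<lambda>c. of_bool (T < h c))
      = bernoulli_expectation S p (\<lambda>c. of_bool (T - m < h c - m))"
    by simp
  also have "\<dots> \<le> exp (- l * (T - m)) * bernoulli_expectation S p (\<lambda>c. exp (l * (h c - m)))"
    using p l(1) by (intro bernoulli_expectation_of_bool_less_le) auto
  also have "\<dots> \<le> exp (- l * (T - \<sigma>)) * exp 1"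
    using m l(1) mgf bernoulli_expectation_nonneg[OF p S, of "\<lambda>c. exp (l * (h c - m))"]
    by (intro mult_mono) (auto simp: algebra_simps)
  also have "\<dots> \<le> exp (2 - 32 * ln N)"
    using \<open>32 * ln N \<le> l * T\<close> l(2) by (simp add: exp_add[symmetric] algebra_simps)
  also have "\<dots> \<le> 1 / N^3"
    using N by (rule exp_two_minus_32_ln_le)
  finally show ?thesis by (simp add: h_def T_def)
qed

section \<open>Matrix norms and the term B1\<close>

lemma norm_F_eq_norm: "norm_F A = norm A"
  unfolding norm_F_def norm_vec_def L2_set_def
  by (simp add: power2_norm_eq_inner inner_vec_def power2_eq_square abs_of_nonneg sum_nonneg)

lemma norm_row_le_norm_2inf: "norm (A $ j) \<le> norm_2inf A"
  unfolding norm_2inf_def by (rule Max_ge) auto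

lemma abs_entry_le_norm_max: "\<bar>A $ i $ j\<bar> \<le> norm_max A"
  unfolding norm_max_def by (rule Max_ge) auto

lemma norm_row_mult_orthogonal:
  fixes A :: "real^'n^'m" and P :: "real^'n^'n"
  assumes "orthogonal_matrix P"
  shows "norm ((A ** P) $ j) = norm (A $ j)"
proof -
  have "(A ** P) $ j = transpose P *v (A $ j)"
    by (simp add: vec_eq_iff matrix_matrix_mult_def matrix_vector_mult_def transpose_def mult.commute)
  moreover have "orthogonal_transformation ((*v) (transpose P))"
    using assms by (simp add: orthogonal_transformation_matrix matrix_vector_mul_linear)
  ultimately show ?thesis by (metis orthogonal_transformation_norm)
qed

lemma norm_row_mult_orthogonal_le:
  fixes A :: "real^'n^'m" and P :: "real^'n^'n"
  assumes "orthogonal_matrix P" "norm_2inf A \<le> C"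
  shows "norm ((A ** P) $ j) \<le> C"
  using norm_row_le_norm_2inf[of A j] assms by (simp add: norm_row_mult_orthogonal)

lemma norm_sum_scaleR_rows_le:
  fixes A :: "real^'c^'r" and w :: "real^'r"
  shows "norm (\<Sum>j\<in>UNIV. (w $ j) *\<^sub>R (A $ j)) \<le> norm_spec A * norm w"
proof -
  define u where "u = transpose A *v w"
  have u: "(\<Sum>j\<in>UNIV. (w $ j) *\<^sub>R (A $ j)) = u"
    by (simp add: u_def vec_eq_iff matrix_vector_mult_def transpose_def mult.commute)
  have "(norm u)^2 = (transpose A *v w) \<bullet> u"
    by (simp add: power2_norm_eq_inner u_def)
  also have "\<dots> = w \<bullet> (A *v u)"
    by (simp only: transpose_matrix_vector dot_lmul_matrix)
  also have "\<dots> \<le> norm w * norm (A *v u)"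
    by (rule Cauchy_Schwarz_ineq2[THEN order_trans[OF abs_ge_self]])
  also have "\<dots> \<le> norm w * (norm_spec A * norm u)"
    unfolding norm_spec_def by (intro mult_left_mono onorm) auto
  finally have "norm u * norm u \<le> (norm_spec A * norm w) * norm u"
    by (simp add: power2_eq_square algebra_simps)
  moreover have "0 \<le> norm_spec A"
    unfolding norm_spec_def by (rule onorm_pos_le) simp
  ultimately show ?thesis
    unfolding u by (cases "norm u = 0") auto
qed

lemma kappa2_upper:
  fixes b2 :: "real \<Rightarrow> real"
  assumes "continuous_on UNIV b2" "\<bar>x\<bar> \<le> \<alpha>"
  shows "b2 x \<le> kappa2 b2 \<alpha>"
proof -
  have eq: "{x. \<bar>x\<bar> \<le> \<alpha>} = cball (0::real) \<alpha>" by (auto simp: dist_real_def)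
  have "compact (b2 ` cball 0 \<alpha>)"
    by (rule compact_continuous_image) (auto intro: continuous_on_subset[OF assms(1)])
  then have "bdd_above (b2 ` cball 0 \<alpha>)"
    by (intro bounded_imp_bdd_above compact_imp_bounded)
  then show ?thesis
    unfolding kappa2_def eq using assms(2) by (intro cSup_upper) (auto simp: dist_real_def)
qed

lemma B1_add:
  "B1 b2 Mst (\<lambda>i j. f i j + g i j) Ah Ast Th i = B1 b2 Mst f Ah Ast Th i + B1 b2 Mst g Ah Ast Th i"
  unfolding B1_def by (simp add: distrib_right scaleR_add_left sum.distrib)

lemma B1_cong:
  "Ah = Ah' \<Longrightarrow> Ast = Ast' \<Longrightarrow> Th = Th' \<Longrightarrow> i = i' \<Longrightarrow> (\<And>j. om i' j = om' i' j) \<Longrightarrow>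
    B1 b2 Mst om Ah Ast Th i = B1 b2 Mst om' Ah' Ast' Th' i'"
  unfolding B1_def by simp

lemma B1_eq_sum_scaleR:
  "B1 b2 Mst om Ah Ast Th i
     = (\<Sum>j\<in>UNIV. om i j *\<^sub>R ((b2 (Mst $ i $ j) * ((Ah $ j - Ast $ j) \<bullet> Th $ i)) *\<^sub>R Ah $ j))"
  unfolding B1_def by (simp add: mult.assoc)

lemma norm_B1_summand_le:
  fixes d \<theta> a :: "'v::real_inner"
  assumes "0 \<le> \<beta>" "\<beta> \<le> \<kappa>" "norm \<theta> \<le> C1" "norm a \<le> C2"
  shows "norm ((\<beta> * (d \<bullet> \<theta>)) *\<^sub>R a) \<le> \<kappa> * C1 * C2 * norm d"
proof -
  have "norm ((\<beta> * (d \<bullet> \<theta>)) *\<^sub>R a) = \<beta> * \<bar>d \<bullet> \<theta>\<bar> * norm a"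
    using assms(1) by (simp add: abs_mult)
  also have "\<dots> \<le> \<kappa> * (norm d * C1) * C2"
    using assms Cauchy_Schwarz_ineq2[of d \<theta>] order.trans[OF norm_ge_zero assms(3)]
    by (intro mult_mono order.trans[OF _ mult_left_mono[OF assms(3)]]) auto
  finally show ?thesis by (simp add: algebra_simps)
qed

lemma norm_B1_le:
  fixes Ah Ast :: "real^'r^'p" and Th :: "real^'r^'n"
  assumes "\<And>j. 0 \<le> om i j" "\<And>j. om i j \<le> q"
    and "\<And>j. 0 \<le> b2 (Mst $ i $ j)" "\<And>j. b2 (Mst $ i $ j) \<le> \<kappa>" and "norm (Th $ i) \<le> C1"
  shows "norm (B1 b2 Mst om Ah Ast Th i) \<le> \<kappa> * q * C1 * norm_spec Ah * norm_F (Ah - Ast)"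
proof -
  have q: "0 \<le> q" and \<kappa>: "0 \<le> \<kappa>" and C1: "0 \<le> C1"
    using order.trans[OF assms(1,2)] order.trans[OF assms(3,4)] order.trans[OF norm_ge_zero assms(5)]
    by auto
  define w where "w = (\<chi> j. om i j * b2 (Mst $ i $ j) * ((Ah - Ast) $ j \<bullet> Th $ i))"
  have "norm (w $ j) \<le> norm ((\<chi> j. q * \<kappa> * C1 * norm ((Ah - Ast) $ j)) $ j)" for j
  proof -
    have "norm (w $ j) = om i j * b2 (Mst $ i $ j) * \<bar>(Ah - Ast) $ j \<bullet> Th $ i\<bar>"
      using assms by (simp add: w_def abs_mult)
    also have "\<dots> \<le> q * \<kappa> * (norm ((Ah - Ast) $ j) * C1)"
      using assms q \<kappa> Cauchy_Schwarz_ineq2[of "(Ah - Ast) $ j" "Th $ i"]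
      by (intro mult_mono order.trans[OF _ mult_left_mono[OF assms(5)]]) auto
    finally show ?thesis using q \<kappa> C1 by (simp add: algebra_simps)
  qed
  then have "norm w \<le> norm (\<chi> j. q * \<kappa> * C1 * norm ((Ah - Ast) $ j))"
    by (rule norm_le_componentwise_cart)
  also have "\<dots> = \<bar>q * \<kappa> * C1\<bar> * norm (Ah - Ast)"
    unfolding norm_vec_def[of "Ah - Ast"] norm_vec_def[of "\<chi> j. q * \<kappa> * C1 * norm ((Ah - Ast) $ j)"]
    by (simp add: abs_mult L2_set_right_distrib)
  also have "\<dots> = q * \<kappa> * C1 * norm_F (Ah - Ast)"
    using q \<kappa> C1 by (simp add: norm_F_eq_norm abs_of_nonneg)
  finally have w: "norm w \<le> q * \<kappa> * C1 * norm_F (Ah - Ast)" .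
  have "B1 b2 Mst om Ah Ast Th i = (\<Sum>j\<in>UNIV. (w $ j) *\<^sub>R (Ah $ j))"
    by (simp add: B1_def w_def)
  also have "norm \<dots> \<le> norm_spec Ah * (q * \<kappa> * C1 * norm_F (Ah - Ast))"
    using norm_sum_scaleR_rows_le[of w Ah] w onorm_pos_le[of "(*v) Ah"]
    by (auto simp: norm_spec_def intro: order_trans mult_left_mono)
  finally show ?thesis by (simp add: algebra_simps)
qed

lemma norm_B1_le_of_deviation:
  fixes Ah Ast :: "real^'r^'p" and Th :: "real^'r^'n"
  assumes "\<And>j. 0 \<le> \<pi> i j" "\<And>j. \<pi> i j \<le> q"
    and "\<And>j. 0 \<le> b2 (Mst $ i $ j)" "\<And>j. b2 (Mst $ i $ j) \<le> \<kappa>" and "norm (Th $ i) \<le> C1"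
    and "norm (B1 b2 Mst (\<lambda>i j. om i j - \<pi> i j) Ah Ast Th i) \<le> t"
  shows "norm (B1 b2 Mst om Ah Ast Th i) \<le> \<kappa> * q * C1 * norm_spec Ah * norm_F (Ah - Ast) + t"
proof -
  have "B1 b2 Mst om Ah Ast Th i = B1 b2 Mst \<pi> Ah Ast Th i + B1 b2 Mst (\<lambda>i j. om i j - \<pi> i j) Ah Ast Th i"
    by (simp flip: B1_add)
  then have "norm (B1 b2 Mst om Ah Ast Th i)
      \<le> norm (B1 b2 Mst \<pi> Ah Ast Th i) + norm (B1 b2 Mst (\<lambda>i j. om i j - \<pi> i j) Ah Ast Th i)"
    by (simp add: norm_triangle_ineq)
  also have "\<dots> \<le> \<kappa> * q * C1 * norm_spec Ah * norm_F (Ah - Ast) + t"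
    using assms by (intro add_mono norm_B1_le)
  finally show ?thesis .
qed

lemma continuous_on_matrix_mult_left:
  fixes B :: "real^'m^'n" and f :: "'z::topological_space \<Rightarrow> real^'k^'m"
  assumes "continuous_on S f"
  shows "continuous_on S (\<lambda>z. B ** f z)"
  unfolding matrix_matrix_mult_def by (intro continuous_intros assms)

lemma continuous_on_B1:
  assumes "continuous_on S Ah" "continuous_on S Ast" "continuous_on S Th"
  shows "continuous_on S (\<lambda>z. B1 b2 Mst om (Ah z) (Ast z) (Th z) i)"
  unfolding B1_def by (intro continuous_intros assms)

section \<open>Tail of the centred part of B1\<close>

lemma sum_product_fst_eq:
  fixes f :: "'b \<Rightarrow> 'v::comm_monoid_add"
  assumes "finite N" "i \<in> N"
  shows "(\<Sum>s\<in>N \<times> B. if fst s = i then f (snd s) else 0) = (\<Sum>j\<in>B. f j)"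
proof -
  have "(\<Sum>s\<in>N \<times> B. if fst s = i then f (snd s) else 0)
      = (\<Sum>i'\<in>N. \<Sum>j\<in>B. if i' = i then f j else 0)"
    by (subst sum.cartesian_product) (auto intro!: sum.cong)
  also have "\<dots> = (\<Sum>j\<in>B. f j)"
    using assms by (subst sum.swap) (simp add: sum.delta)
  finally show ?thesis .
qed

lemma bernoulli_row_sum_tail:
  fixes g :: "'p::finite \<Rightarrow> 'v::real_inner" and \<pi> :: "'n \<Rightarrow> 'p \<Rightarrow> real" and N :: "'n set"
  assumes N: "finite N" "i \<in> N" and \<pi>: "\<And>i j. 0 \<le> \<pi> i j" "\<And>i j. \<pi> i j \<le> 1"
    and gL: "\<And>j. norm (g j) \<le> L" and gV: "(\<Sum>j\<in>UNIV. \<pi> i j * (norm (g j))^2) \<le> \<sigma>^2"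
    and \<sigma>: "0 \<le> \<sigma>" and L: "0 \<le> L" and n: "4 \<le> n"
  shows "bernoulli_expectation (N \<times> UNIV) (\<lambda>s. \<pi> (fst s) (snd s))
     (\<lambda>c. of_bool (64 * ln n * (\<sigma> + L/2) < norm (\<Sum>j\<in>UNIV. (c (i, j) - \<pi> i j) *\<^sub>R g j))) \<le> 1 / n^3"
proof -
  define a where "a s = (if fst s = i then g (snd s) else 0)" for s
  have row: "(\<Sum>s\<in>N \<times> UNIV. (c s - \<pi> (fst s) (snd s)) *\<^sub>R a s)
           = (\<Sum>j\<in>UNIV. (c (i, j) - \<pi> i j) *\<^sub>R g j)" for c
  proof -
    have "(\<Sum>s\<in>N \<times> UNIV. (c s - \<pi> (fst s) (snd s)) *\<^sub>R a s)
        = (\<Sum>s\<in>N \<times> UNIV. if fst s = i then (c (i, snd s) - \<pi> i (snd s)) *\<^sub>R g (snd s) else 0)"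
      by (intro sum.cong) (auto simp: a_def)
    also have "\<dots> = (\<Sum>j\<in>UNIV. (c (i, j) - \<pi> i j) *\<^sub>R g j)"
      by (rule sum_product_fst_eq[OF N])
    finally show ?thesis .
  qed
  have "(\<Sum>s\<in>N \<times> UNIV. \<pi> (fst s) (snd s) * (norm (a s))^2)
      = (\<Sum>s\<in>N \<times> UNIV. if fst s = i then \<pi> i (snd s) * (norm (g (snd s)))^2 else 0)"
    by (intro sum.cong) (auto simp: a_def)
  also have "\<dots> = (\<Sum>j\<in>UNIV. \<pi> i j * (norm (g j))^2)"
    by (rule sum_product_fst_eq[OF N])
  finally have aV: "(\<Sum>s\<in>N \<times> UNIV. \<pi> (fst s) (snd s) * (norm (a s))^2) \<le> \<sigma>^2"
    using gV by simp
  have aL: "\<forall>s\<in>N \<times> UNIV. norm (a s) \<le> L"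
    using gL L by (simp add: a_def)
  show ?thesis
    using bernoulli_sum_tail[OF _ _ aL aV \<sigma> L n] N \<pi> by (simp add: row)
qed

lemma B1_deviation_tail:
  fixes Ah Ast :: "real^'r^'p::finite" and Th :: "real^'r^'n" and \<pi> :: "'n \<Rightarrow> 'p \<Rightarrow> real"
    and N :: "'n set"
  assumes N: "finite N" "i \<in> N"
    and \<pi>: "\<And>i j. 0 \<le> \<pi> i j" "\<And>i j. \<pi> i j \<le> 1" "\<And>i j. \<pi> i j \<le> \<pi>max"
    and b2: "\<And>j. 0 \<le> b2 (Mst $ i $ j)" "\<And>j. b2 (Mst $ i $ j) \<le> \<kappa>"
    and Th: "norm (Th $ i) \<le> C1" and Ah: "\<And>j. norm (Ah $ j) \<le> C2" and Ast: "\<And>j. norm (Ast $ j) \<le> C2"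
    and n: "4 \<le> n"
  shows "bernoulli_expectation (N \<times> UNIV) (\<lambda>s. \<pi> (fst s) (snd s))
     (\<lambda>c. of_bool (64 * ln n * (sqrt \<pi>max * \<kappa> * C1 * C2 * norm_F (Ah - Ast) + \<kappa> * C1 * C2^2)
                   < norm (B1 b2 Mst (\<lambda>i j. c (i, j) - \<pi> i j) Ah Ast Th i))) \<le> 1 / n^3"
proof -
  define g where "g j = (b2 (Mst $ i $ j) * ((Ah $ j - Ast $ j) \<bullet> Th $ i)) *\<^sub>R Ah $ j" for j
  define \<sigma> where "\<sigma> = sqrt \<pi>max * \<kappa> * C1 * C2 * norm_F (Ah - Ast)"
  have \<kappa>: "0 \<le> \<kappa>" and C1: "0 \<le> C1" and C2: "0 \<le> C2" and \<pi>max: "0 \<le> \<pi>max"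
    using order.trans[OF b2] order.trans[OF norm_ge_zero Th] order.trans[OF norm_ge_zero Ah]
      order.trans[OF \<pi>(1,3)] by auto
  have g: "norm (g j) \<le> \<kappa> * C1 * C2 * norm (Ah $ j - Ast $ j)" for j
    unfolding g_def using b2 Th Ah by (rule norm_B1_summand_le)
  have gL: "norm (g j) \<le> 2 * \<kappa> * C1 * C2^2" for j
  proof -
    have "norm (Ah $ j - Ast $ j) \<le> 2 * C2"
      using norm_triangle_ineq4[of "Ah $ j" "Ast $ j"] Ah[of j] Ast[of j] by simp
    then have "\<kappa> * C1 * C2 * norm (Ah $ j - Ast $ j) \<le> \<kappa> * C1 * C2 * (2 * C2)"
      using \<kappa> C1 C2 by (intro mult_left_mono) auto
    then show ?thesis
      using g[of j] by (simp add: power2_eq_square algebra_simps)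
  qed
  have gV: "(\<Sum>j\<in>UNIV. \<pi> i j * (norm (g j))^2) \<le> \<sigma>^2"
  proof -
    have "(\<Sum>j\<in>UNIV. \<pi> i j * (norm (g j))^2)
        \<le> (\<Sum>j\<in>UNIV. \<pi>max * (\<kappa> * C1 * C2 * norm (Ah $ j - Ast $ j))^2)"
      using \<pi> \<pi>max g by (intro sum_mono mult_mono power_mono) auto
    also have "\<dots> = \<sigma>^2"
      using \<pi>max by (simp add: \<sigma>_def power_mult_distrib norm_F_eq_norm norm_vec_def[of "Ah - Ast"]
          L2_set_def sum_nonneg sum_distrib_left mult.assoc)
    finally show ?thesis .
  qed
  have "0 \<le> \<sigma>" and "0 \<le> 2 * \<kappa> * C1 * C2^2"
    using \<kappa> C1 C2 \<pi>max by (simp_all add: \<sigma>_def norm_F_eq_norm)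
  from bernoulli_row_sum_tail[where \<pi> = \<pi> and i = i, OF N \<pi>(1,2) gL gV this n] show ?thesis
    by (simp add: B1_eq_sum_scaleR g_def \<sigma>_def mult.assoc)
qed

lemma B1_deviation_tail_rows:
  fixes Ah Ast :: "real^'r^'p::finite" and Th :: "real^'r^'n::finite" and \<pi> :: "'n \<Rightarrow> 'p \<Rightarrow> real"
    and N :: "'n set"
  assumes \<pi>: "\<And>i j. 0 \<le> \<pi> i j" "\<And>i j. \<pi> i j \<le> 1" "\<And>i j. \<pi> i j \<le> \<pi>max"
    and b2: "\<And>i j. 0 \<le> b2 (Mst $ i $ j)" "\<And>i j. b2 (Mst $ i $ j) \<le> \<kappa>"
    and rows: "\<And>j. norm (Ah $ j) \<le> C2" "\<And>j. norm (Ast $ j) \<le> C2" "\<And>i. norm (Th $ i) \<le> C1"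
    and n: "4 \<le> n"
  shows "bernoulli_expectation (N \<times> UNIV) (\<lambda>s. \<pi> (fst s) (snd s))
     (\<lambda>c. of_bool (\<exists>i\<in>N. 64 * ln n * (sqrt \<pi>max * \<kappa> * C1 * C2 * norm_F (Ah - Ast) + \<kappa> * C1 * C2^2)
                           < norm (B1 b2 Mst (\<lambda>i j. c (i, j) - \<pi> i j) Ah Ast Th i)))
     \<le> card N / n^3"
  by (rule order_trans[OF bernoulli_expectation_of_bool_Bex_le[where \<epsilon> = "1 / n^3"]])
     (use \<pi> in \<open>auto intro!: B1_deviation_tail b2 rows n\<close>)

section \<open>Conditioning on an independent random element\<close>

lemma singleton_in_sets_PiM_borel:
  fixes c :: "'s \<Rightarrow> 'b::t1_space"
  assumes "finite S" "c \<in> extensional S"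
  shows "{c} \<in> sets (PiM S (\<lambda>_. borel))"
  using assms by (simp add: PiE_singleton[symmetric] sets_PiM_I_finite)

lemma measure_vimage_eq_integral_indicator:
  "measure M {x \<in> space M. Z x \<in> A} = integral\<^sup>L M (\<lambda>x. indicator A (Z x))"
proof -
  have "integral\<^sup>L M (\<lambda>x. indicator A (Z x)) = integral\<^sup>L M (indicator {x \<in> space M. Z x \<in> A})"
    by (intro Bochner_Integration.integral_cong) (auto simp: indicator_def)
  also have "\<dots> = measure M {x \<in> space M. Z x \<in> A}"
    by (simp add: Int_absorb2 subsetI)
  finally show ?thesis ..
qed

lemma prob_bernoulli_vector_eq:
  assumes P: "prob_space M" and S: "finite S"
    and X_meas: "\<And>s. s \<in> S \<Longrightarrow> X s \<in> borel_measurable M"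
    and X_01: "\<And>s x. s \<in> S \<Longrightarrow> x \<in> space M \<Longrightarrow> X s x \<in> {0, 1}"
    and X_prob: "\<And>s. s \<in> S \<Longrightarrow> measure M {x \<in> space M. X s x = 1} = p s"
    and X_indep: "prob_space.indep_vars M (\<lambda>_. borel) X S"
    and c: "c \<in> PiE S (\<lambda>_. {0, 1})"
  shows "measure M {x \<in> space M. (\<lambda>s\<in>S. X s x) = c} = (\<Prod>s\<in>S. bernoulli_weight (p s) (c s))"
proof -
  interpret prob_space M by (rule P)
  have eq: "{x \<in> space M. (\<lambda>s\<in>S. X s x) = c} = space M \<inter> (\<Inter>s\<in>S. X s -` {c s} \<inter> space M)"
    using c by (auto simp: fun_eq_iff PiE_def extensional_def)
  show ?thesis
  proof (cases "S = {}")
    case True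
    then show ?thesis unfolding eq by (simp add: prob_space)
  next
    case False
    have "prob (\<Inter>s\<in>S. X s -` {c s} \<inter> space M) = (\<Prod>s\<in>S. prob (X s -` {c s} \<inter> space M))"
      using X_indep False S by (intro indep_varsD[where M'="\<lambda>_. borel"]) auto
    also have "\<dots> = (\<Prod>s\<in>S. bernoulli_weight (p s) (c s))"
    proof (intro prod.cong refl)
      fix s assume s: "s \<in> S"
      have one: "{x \<in> space M. X s x = 1} \<in> events"
        using X_meas[OF s] by measurable
      show "prob (X s -` {c s} \<inter> space M) = bernoulli_weight (p s) (c s)"
      proof (cases "c s = 1")
        case True
        then have "X s -` {c s} \<inter> space M = {x \<in> space M. X s x = 1}" by auto
        then show ?thesis using True X_prob[OF s] by (simp add: bernoulli_weight_def)
      next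
        case False
        then have "c s = 0" using c s by (auto simp: PiE_def)
        then have "X s -` {c s} \<inter> space M = space M - {x \<in> space M. X s x = 1}"
          using X_01[OF s] by auto
        then show ?thesis using False X_prob[OF s] prob_compl[OF one] by (simp add: bernoulli_weight_def)
      qed
    qed
    finally show ?thesis
      using False unfolding eq by (simp add: Int_absorb1 INF_lower2)
  qed
qed

lemma bernoulli_conditioning:
  fixes Z :: "'a \<Rightarrow> 'b" and X :: "'s \<Rightarrow> 'a \<Rightarrow> real" and G :: "('s \<Rightarrow> real) \<Rightarrow> 'b set"
  assumes P: "prob_space M" and S: "finite S" and Z: "Z \<in> M \<rightarrow>\<^sub>M N"
    and X_meas: "\<And>s. s \<in> S \<Longrightarrow> X s \<in> borel_measurable M"
    and X_01: "\<And>s x. s \<in> S \<Longrightarrow> x \<in> space M \<Longrightarrow> X s x \<in> {0, 1}"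
    and X_prob: "\<And>s. s \<in> S \<Longrightarrow> measure M {x \<in> space M. X s x = 1} = p s"
    and X_indep: "prob_space.indep_vars M (\<lambda>_. borel) X S"
    and ZX_indep: "\<And>A B. A \<in> sets N \<Longrightarrow> B \<in> sets (PiM S (\<lambda>_. borel :: real measure)) \<Longrightarrow>
       measure M {x \<in> space M. Z x \<in> A \<and> (\<lambda>s\<in>S. X s x) \<in> B}
       = measure M {x \<in> space M. Z x \<in> A} * measure M {x \<in> space M. (\<lambda>s\<in>S. X s x) \<in> B}"
    and G: "\<And>c. G c \<in> sets N"
    and small: "\<And>x. x \<in> space M \<Longrightarrow> bernoulli_expectation S p (\<lambda>c. indicator (G c) (Z x)) \<le> \<delta>"
  shows "\<exists>E \<in> sets M. 1 - \<delta> \<le> measure M E \<and> (\<forall>x \<in> E. Z x \<notin> G (\<lambda>s\<in>S. X s x))"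
proof -
  interpret prob_space M by (rule P)
  define W where "W x = (\<lambda>s\<in>S. X s x)" for x
  define Cs where "Cs = PiE S (\<lambda>_. {0, 1 :: real})"
  define w where "w c = (\<Prod>s\<in>S. bernoulli_weight (p s) (c s))" for c
  define Bad where "Bad = (\<Union>c\<in>Cs. {x \<in> space M. Z x \<in> G c \<and> W x \<in> {c}})"
  have Cs: "finite Cs"
    unfolding Cs_def using S by (intro finite_PiE) auto
  have W: "W \<in> M \<rightarrow>\<^sub>M PiM S (\<lambda>_. borel)"
    unfolding W_def by (intro measurable_restrict X_meas)
  have c_sets: "{c} \<in> sets (PiM S (\<lambda>_. borel :: real measure))" if "c \<in> Cs" for c
    using that S by (intro singleton_in_sets_PiM_borel) (auto simp: Cs_def PiE_def)
  have ZG_sets: "{x \<in> space M. Z x \<in> G c} \<in> events" for c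
    using measurable_sets[OF Z G] by (simp add: vimage_def Int_def conj_commute)
  have bad_sets: "{x \<in> space M. Z x \<in> G c \<and> W x \<in> {c}} \<in> events" if "c \<in> Cs" for c
  proof -
    have "{x \<in> space M. Z x \<in> G c \<and> W x \<in> {c}} = {x \<in> space M. Z x \<in> G c} \<inter> (W -` {c} \<inter> space M)"
      by auto
    then show ?thesis
      using measurable_sets[OF W c_sets[OF that]] ZG_sets[of c] by auto
  qed
  have Bad: "Bad \<in> events"
    unfolding Bad_def using Cs bad_sets by (intro sets.finite_UN) auto
  have integrable_ind: "integrable M (\<lambda>x. indicator (G c) (Z x) :: real)" for c
    using measurable_compose[OF Z borel_measurable_indicator[OF G]]
    by (intro integrable_const_bound[where B=1]) (auto simp: indicator_def)
  have "prob Bad \<le> (\<Sum>c\<in>Cs. prob {x \<in> space M. Z x \<in> G c \<and> W x \<in> {c}})"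
    unfolding Bad_def using Cs bad_sets by (intro finite_measure_subadditive_finite) auto
  also have "\<dots> = (\<Sum>c\<in>Cs. w c * expectation (\<lambda>x. indicator (G c) (Z x)))"
  proof (intro sum.cong refl)
    fix c assume c: "c \<in> Cs"
    show "prob {x \<in> space M. Z x \<in> G c \<and> W x \<in> {c}} = w c * expectation (\<lambda>x. indicator (G c) (Z x))"
      using ZX_indep[OF G c_sets[OF c]] measure_vimage_eq_integral_indicator[of M Z "G c"]
        prob_bernoulli_vector_eq[OF P S X_meas X_01 X_prob X_indep c[unfolded Cs_def]]
      by (simp add: W_def w_def)
  qed
  also have "\<dots> = expectation (\<lambda>x. \<Sum>c\<in>Cs. w c * indicator (G c) (Z x))"
    using integrable_ind by (subst Bochner_Integration.integral_sum) auto
  also have "\<dots> \<le> expectation (\<lambda>_. \<delta>)"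
    using integrable_ind small
    by (intro integral_mono) (auto simp: bernoulli_expectation_def w_def Cs_def)
  also have "\<dots> = \<delta>"
    by (simp add: prob_space)
  finally have "prob Bad \<le> \<delta>" .
  moreover have "Z x \<notin> G (W x)" if "x \<in> space M - Bad" for x
    using that X_01 by (auto simp: Bad_def Cs_def W_def)
  ultimately show ?thesis
    using Bad prob_compl[OF Bad] by (intro bexI[of _ "space M - Bad"]) (auto simp: W_def)
qed

theorem mainTheorem13:
  fixes b b1 b2 :: "real \<Rightarrow> real"
    and Mst :: "real^'p::finite^'n::finite"
    and U :: "real^'r::finite^'n" and D :: "real^'r^'r" and V :: "real^'r^'p"
    and M :: "'a measure"
    and \<omega> :: "'n \<Rightarrow> 'p \<Rightarrow> 'a \<Rightarrow> real" and \<pi> :: "'n \<Rightarrow> 'p \<Rightarrow> real"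
    and N2 :: "'n set"
    and Ahat :: "'a \<Rightarrow> real^'r^'p" and Phat :: "'a \<Rightarrow> real^'r^'r"
    and C1 C2 :: real
  assumes b1: "\<And>x. (b has_real_derivative b1 x) (at x)"
    and b2: "\<And>x. (b1 has_real_derivative b2 x) (at x)"
    and b2_cont: "continuous_on UNIV b2"
    and b2_pos: "\<And>x. b2 x > 0"
    and rank: "rank Mst = CARD('r)"
    and svd: "Mst = U ** D ** transpose V"
    and U_orth: "transpose U ** U = mat 1"
    and V_orth: "transpose V ** V = mat 1"
    and D_diag: "\<And>i j. i \<noteq> j \<Longrightarrow> D $ i $ j = 0"
    and D_pos: "\<And>i. D $ i $ i > 0"
    and n_ge: "CARD('n) \<ge> 4"
    and r_le: "CARD('r) \<le> CARD('n)"
    and P: "prob_space M"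
    and \<omega>_meas: "\<And>i j. \<omega> i j \<in> borel_measurable M"
    and \<omega>_01: "\<And>i j x. x \<in> space M \<Longrightarrow> \<omega> i j x \<in> {0, 1}"
    and \<omega>_prob: "\<And>i j. measure M {x \<in> space M. \<omega> i j x = 1} = \<pi> i j"
    and \<omega>_indep: "prob_space.indep_vars M (\<lambda>_. borel) (\<lambda>(i, j). \<omega> i j) UNIV"
    and Ahat_meas: "Ahat \<in> borel_measurable M"
    and Phat_meas: "Phat \<in> borel_measurable M"
    and Phat_orth: "\<And>x. x \<in> space M \<Longrightarrow> orthogonal_matrix (Phat x)"
    and indep: "\<And>A B. A \<in> sets (borel :: ((real^'r^'p) \<times> (real^'r^'r)) measure) \<Longrightarrow>
                   B \<in> sets (PiM (N2 \<times> UNIV) (\<lambda>_. borel :: real measure)) \<Longrightarrow>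
       measure M {x \<in> space M. (Ahat x, Phat x) \<in> A \<and> (\<lambda>ij\<in>N2 \<times> UNIV. \<omega> (fst ij) (snd ij) x) \<in> B}
       = measure M {x \<in> space M. (Ahat x, Phat x) \<in> A}
         * measure M {x \<in> space M. (\<lambda>ij\<in>N2 \<times> UNIV. \<omega> (fst ij) (snd ij) x) \<in> B}"
    and Ahat_bd: "\<And>x. x \<in> space M \<Longrightarrow> norm_2inf (Ahat x) \<le> C2"
    and V_bd: "norm_2inf V \<le> C2"
    and UD_bd: "norm_2inf (U ** D) \<le> C1"
  shows "\<exists>E \<in> sets M. measure M E \<ge> 1 - 1 / (real CARD('n) * real CARD('r)) \<and>
    (\<forall>x \<in> E. \<forall>i \<in> N2.
      (let \<kappa> = kappa2 b2 (2 * norm_max Mst + 1);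
           \<pi>max = Max (range (\<lambda>(i, j). \<pi> i j));
           Ast = V ** Phat x;
           Th = U ** D ** Phat x
       in norm (B1 b2 Mst (\<lambda>i j. \<omega> i j x) (Ahat x) Ast Th i)
          \<le> \<kappa> * \<pi>max * C1 * norm_spec (Ahat x) * norm_F (Ahat x - Ast)
            + 64 * ln (real CARD('n)) * (sqrt \<pi>max * \<kappa> * C1 * C2 * norm_F (Ahat x - Ast)
                                          + \<kappa> * C1 * C2^2)))"
proof -
  interpret prob_space M by (rule P)
  define \<kappa> where "\<kappa> = kappa2 b2 (2 * norm_max Mst + 1)"
  define \<pi>max where "\<pi>max = Max (range (\<lambda>(i, j). \<pi> i j))"
  define n where "n = real CARD('n)"
  define T where "T z = 64 * ln n * (sqrt \<pi>max * \<kappa> * C1 * C2 * norm_F (fst z - V ** snd z)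
                                     + \<kappa> * C1 * C2^2)" for z :: "(real^'r^'p) \<times> (real^'r^'r)"
  define G where "G c = {z. \<exists>i\<in>N2. T z < norm (B1 b2 Mst (\<lambda>i j. c (i, j) - \<pi> i j)
                                             (fst z) (V ** snd z) (U ** D ** snd z) i)}" for c
  have \<pi>: "0 \<le> \<pi> i j" "\<pi> i j \<le> 1" "\<pi> i j \<le> \<pi>max" for i j
  proof -
    show "0 \<le> \<pi> i j" "\<pi> i j \<le> 1"
      using \<omega>_prob[of i j] measure_nonneg[of M "{x \<in> space M. \<omega> i j x = 1}"]
        prob_le_1[of "{x \<in> space M. \<omega> i j x = 1}"] by simp_all
    show "\<pi> i j \<le> \<pi>max"
      unfolding \<pi>max_def by (rule Max_ge) auto
  qed
  have b2_le: "b2 (Mst $ i $ j) \<le> \<kappa>" for i j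
    using abs_entry_le_norm_max[of Mst i j] unfolding \<kappa>_def by (intro kappa2_upper[OF b2_cont]) simp
  have rows: "norm (Ahat x $ j) \<le> C2" "norm ((V ** Phat x) $ j) \<le> C2"
    "norm ((U ** D ** Phat x) $ i) \<le> C1" if "x \<in> space M" for x i j
    using norm_row_le_norm_2inf[of "Ahat x" j] Ahat_bd[OF that] Phat_orth[OF that] V_bd UD_bd
    by (auto intro: norm_row_mult_orthogonal_le order_trans)
  have "open (G c)" for c
    unfolding G_def T_def norm_F_eq_norm Bex_def
    by (intro open_Collect_ex open_Collect_conj open_Collect_less continuous_intros continuous_on_B1
        continuous_on_matrix_mult_left) auto
  moreover have "bernoulli_expectation (N2 \<times> UNIV) (\<lambda>s. \<pi> (fst s) (snd s))
                   (\<lambda>c. indicator (G c) (Ahat x, Phat x)) \<le> 1 / (n * real CARD('r))"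
    if "x \<in> space M" for x
  proof -
    have "real (card N2) * real CARD('r) \<le> n * n"
      using card_mono[of UNIV N2] r_le by (intro mult_mono) (auto simp: n_def)
    then have "card N2 / n^3 \<le> 1 / (n * real CARD('r))"
      using n_ge by (simp add: n_def field_simps power3_eq_cube)
    then show ?thesis
      using B1_deviation_tail_rows[where \<pi> = \<pi> and ?b2.0 = b2 and Mst = Mst and Ah = "Ahat x"
          and Ast = "V ** Phat x" and Th = "U ** D ** Phat x" and n = n and N = N2,
          OF \<pi> less_imp_le[OF b2_pos] b2_le rows[OF that]] n_ge
      by (simp add: G_def T_def indicator_def n_def)
  qed
  ultimately have "\<exists>E \<in> events. 1 - 1 / (n * real CARD('r)) \<le> prob E \<and>
      (\<forall>x \<in> E. (Ahat x, Phat x) \<notin> G (\<lambda>s\<in>N2 \<times> UNIV. \<omega> (fst s) (snd s) x))"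
    using \<omega>_meas \<omega>_01 \<omega>_prob indep_vars_subset[OF \<omega>_indep] indep
    by (intro bernoulli_conditioning[OF P _ measurable_Pair[OF Ahat_meas Phat_meas, unfolded borel_prod]])
       (auto simp: case_prod_beta')
  then obtain E where E: "E \<in> events" "1 - 1 / (n * real CARD('r)) \<le> prob E"
    and E_good: "\<And>x. x \<in> E \<Longrightarrow> (Ahat x, Phat x) \<notin> G (\<lambda>s\<in>N2 \<times> UNIV. \<omega> (fst s) (snd s) x)"
    by blast
  have "norm (B1 b2 Mst (\<lambda>i j. \<omega> i j x) (Ahat x) (V ** Phat x) (U ** D ** Phat x) i)
      \<le> \<kappa> * \<pi>max * C1 * norm_spec (Ahat x) * norm_F (Ahat x - V ** Phat x) + T (Ahat x, Phat x)"
    if x: "x \<in> E" and i: "i \<in> N2" for x i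
  proof (rule norm_B1_le_of_deviation[where \<pi> = \<pi> and ?b2.0 = b2 and Mst = Mst])
    show "norm (B1 b2 Mst (\<lambda>i j. \<omega> i j x - \<pi> i j) (Ahat x) (V ** Phat x) (U ** D ** Phat x) i)
        \<le> T (Ahat x, Phat x)"
      using E_good[OF x] i by (auto simp: G_def not_less cong: B1_cong)
    show "norm ((U ** D ** Phat x) $ i) \<le> C1"
      using x sets.sets_into_space[OF E(1)] by (blast intro: rows(3))
  qed (use \<pi> b2_pos b2_le in \<open>auto intro: less_imp_le\<close>)
  then show ?thesis
    using E unfolding Let_def \<kappa>_def[symmetric] \<pi>max_def[symmetric] by (auto simp: T_def n_def)
qed

end
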